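(* Let $d\ge1$, let $\{1,\dots,d\}$ be partitioned into $\mathcal{D}$ and $\mathcal{U}$, let $\mu\in\mathbb{R}^d$, $s>0$, $\Sigma=s^2I$, $\alpha>0$, $\delta\in(0,1/2]$, $p_\delta=\Phi^{-1}(\delta)$ and $\beta\in(0,1)$. Suppose $$\|\mu_{\mathcal{D}}\|_2\ \ge\ \frac{\beta}{\sqrt{1-\beta^2}}\,\|\mu_{\mathcal{U}}\|_2 .$$ Then, if the problem $$\min_{e\in\mathbb{R}^d}\ \|e\|_2\quad\text{s.t.}\quad \alpha-\mu^\top e-p_\delta\|\Sigma^{1/2}e\|_2\le0$$ is feasible, its optimal solution (the agent's best response with $\ell_2$ cost) is a $\beta$-desirable effort profile.
   Context: $\Phi$ is the standard normal CDF. The constraint is equivalent to $\mathbb{P}_{Z\sim\mathcal{N}(\mu,\Sigma)}[Z^\top e\ge\alpha]\ge1-\delta$, where $Z$ is the agent's Gaussian belief about the vector $\mathbb{C}h$ of total feature contributions, here with all features having the same variance and no correlations. $\mathcal{D}$ is the set of desirable features and $\mathcal{U}$ the undesirable ones; $v_{\mathcal{D}}$ denotes the restriction of a vector $v$ to coordinates in $\mathcal{D}$. An effort profile $e$ is $\beta$-desirable if $\|e_{\mathcal{D}}\|_2\ge\beta\|e\|_2$. *)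

theory Defs
  imports "HOL-Analysis.Analysis" "HOL-Probability.Probability"
begin

definition Phi :: "real \<Rightarrow> real" where
  "Phi x = measure (density lborel std_normal_density) {..x}"

text \<open>Its inverse (quantile function); Phi is a strictly increasing bijection onto (0,1).\<close>
definition Phi_inv :: "real \<Rightarrow> real" where
  "Phi_inv q = (THE p. Phi p = q)"

definition restrict_vec :: "'n set \<Rightarrow> real ^ 'n \<Rightarrow> real ^ 'n" where
  "restrict_vec D v = (\<chi> i. if i \<in> D then v $ i else 0)"

definition beta_desirable :: "'n set \<Rightarrow> real \<Rightarrow> real ^ 'n \<Rightarrow> bool" where
  "beta_desirable D \<beta> e \<longleftrightarrow> norm (restrict_vec D e) \<ge> \<beta> * norm e"

end

theory Submission
  imports Defs
begin

text \<open>Since \<open>\<delta> \<le> 1/2\<close>, the quantile \<open>p\<^sub>\<delta>\<close> is nonpositive, so for \<open>\<Sigma> = s\<^sup>2 I\<close> the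
  constraint reads \<open>\<mu> \<bullet> e \<ge> \<alpha> + c \<parallel>e\<parallel>\<close> with \<open>c = -p\<^sub>\<delta> s \<ge> 0\<close>. By Cauchy-Schwarz every
  feasible \<open>e\<close> satisfies \<open>(\<parallel>\<mu>\<parallel> - c) \<parallel>e\<parallel> \<ge> \<alpha>\<close>, and the multiple of \<open>\<mu>\<close> with exactly that
  norm is feasible. Hence a minimiser attains equality in Cauchy-Schwarz and is a positive
  multiple of \<open>\<mu>\<close>. Being \<open>\<beta>\<close>-desirable is invariant under scaling, and since
  \<open>\<parallel>\<mu>\<parallel>\<^sup>2 = \<parallel>\<mu>\<^sub>D\<parallel>\<^sup>2 + \<parallel>\<mu>\<^sub>U\<parallel>\<^sup>2\<close> the hypothesis on \<open>\<mu>\<close> says precisely that \<open>\<mu>\<close> is \<open>\<beta>\<close>-desirable.\<close>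

abbreviation std_normal :: "real measure" where
  "std_normal \<equiv> density lborel std_normal_density"

lemma real_distribution_std_normal: "real_distribution std_normal"
  unfolding real_distribution_def real_distribution_axioms_def
  using prob_space_normal_density by simp

lemma Phi_eq_cdf: "Phi = cdf std_normal"
  by (simp add: Phi_def cdf_def fun_eq_iff)

lemma std_normal_singleton: "measure std_normal {x} = 0"
proof -
  have "emeasure std_normal {x} = 0"
    by (subst emeasure_density) (auto intro!: nn_integral_null_set)
  then show ?thesis by (simp add: measure_def)
qed

lemma isCont_Phi: "isCont Phi x"
proof -
  interpret real_distribution std_normal by (rule real_distribution_std_normal)
  show ?thesis
    unfolding Phi_eq_cdf using isCont_cdf std_normal_singleton by simp
qed

lemma Phi_strict_mono: "strict_mono Phi"
proof (rule strict_monoI)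
  interpret real_distribution std_normal by (rule real_distribution_std_normal)
  fix x y :: real
  assume "x < y"
  have "emeasure std_normal {x<..y} \<noteq> 0"
  proof
    assume "emeasure std_normal {x<..y} = 0"
    then have "(\<integral>\<^sup>+ z. ennreal (std_normal_density z) * indicator {x<..y} z \<partial>lborel) = 0"
      by (subst (asm) emeasure_density) auto
    then have "AE z in lborel. z \<notin> {x<..y}"
      by (subst (asm) nn_integral_0_iff_AE) (auto simp: indicator_def std_normal_density_def)
    then have "emeasure lborel {x<..y} = 0"
      by (subst (asm) AE_iff_measurable[of "{x<..y}"]) auto
    with \<open>x < y\<close> show False by simp
  qed
  then have "measure std_normal {x<..y} > 0"
    by (simp add: emeasure_eq_measure zero_less_measure_iff)
  then show "Phi x < Phi y"
    unfolding Phi_eq_cdf using cdf_diff_eq[OF \<open>x < y\<close>] by simp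
qed

lemma Phi_minus: "Phi (- x) = 1 - Phi x"
proof -
  interpret real_distribution std_normal by (rule real_distribution_std_normal)
  have reflect: "emeasure std_normal {..<- x} = emeasure std_normal {x<..}"
  proof -
    have "emeasure std_normal {..<- x}
        = (\<integral>\<^sup>+ z. ennreal (std_normal_density z) * indicator {..<- x} z \<partial>lborel)"
      by (subst emeasure_density) auto
    also have "\<dots> = ennreal \<bar>-1\<bar> * (\<integral>\<^sup>+ z. ennreal (std_normal_density (0 + -1 * z))
                                     * indicator {..<- x} (0 + -1 * z) \<partial>lborel)"
      by (rule nn_integral_real_affine) auto
    also have "\<dots> = (\<integral>\<^sup>+ z. ennreal (std_normal_density z) * indicator {x<..} z \<partial>lborel)"
      by (simp, intro nn_integral_cong) (auto simp: indicator_def std_normal_density_def)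
    also have "\<dots> = emeasure std_normal {x<..}"
      by (subst emeasure_density) auto
    finally show ?thesis .
  qed
  have "measure std_normal {..- x} = measure std_normal {..<- x} + measure std_normal {- x}"
    by (subst measure_Union[symmetric]) (auto intro!: arg_cong[where f = "measure _"])
  also have "\<dots> = measure std_normal {x<..}"
    using reflect std_normal_singleton by (simp add: measure_def)
  also have "\<dots> = measure std_normal (space std_normal - {..x})"
    by (auto intro!: arg_cong[where f = "measure _"])
  also have "\<dots> = 1 - measure std_normal {..x}"
    by (rule prob_compl) simp
  finally show ?thesis
    by (simp add: Phi_def)
qed

lemma Phi_zero: "Phi 0 = 1 / 2"
  using Phi_minus[of 0] by simp

lemma Phi_Phi_inv:
  assumes "0 < q" "q < 1"
  shows "Phi (Phi_inv q) = q"
proof -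
  interpret real_distribution std_normal by (rule real_distribution_std_normal)
  have "eventually (\<lambda>x. Phi x < q) at_bot"
    using cdf_lim_at_bot \<open>0 < q\<close> unfolding Phi_eq_cdf by (rule order_tendstoD)
  moreover have "eventually (\<lambda>x. q < Phi x) at_top"
    using cdf_lim_at_top_prob \<open>q < 1\<close> unfolding Phi_eq_cdf by (rule order_tendstoD)
  ultimately obtain a b where "a \<le> b" "Phi a < q" "q < Phi b"
    unfolding eventually_at_bot_linorder eventually_at_top_linorder
    by (metis linorder_le_cases order.refl)
  then obtain p where p: "Phi p = q"
    using IVT[of Phi a q b] isCont_Phi by force
  have "Phi_inv q = p"
    unfolding Phi_inv_def
    using p strict_mono_eq[OF Phi_strict_mono] by blast
  with p show ?thesis by simp
qed

lemma Phi_inv_nonpos: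
  assumes "0 < q" "q \<le> 1 / 2"
  shows "Phi_inv q \<le> 0"
proof (rule ccontr)
  assume "\<not> Phi_inv q \<le> 0"
  then have "Phi 0 < Phi (Phi_inv q)"
    using Phi_strict_mono by (simp add: strict_mono_less)
  with assms show False
    by (simp add: Phi_zero Phi_Phi_inv)
qed

lemma mat_mult_vector: "mat s *v x = s *\<^sub>R (x :: real ^ 'n)"
  by (simp add: vec_eq_iff matrix_vector_mult_def mat_def mult_delta_left sum.delta)

lemma min_norm_solution_is_pos_multiple:
  fixes \<mu> e\<^sub>0 :: "'a::real_inner"
  assumes "0 < \<alpha>" "0 \<le> c"
    and feasible: "\<alpha> + c * norm e\<^sub>0 \<le> \<mu> \<bullet> e\<^sub>0"
    and minimal: "\<And>e. \<alpha> + c * norm e \<le> \<mu> \<bullet> e \<Longrightarrow> norm e\<^sub>0 \<le> norm e"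
  shows "\<exists>k>0. e\<^sub>0 = k *\<^sub>R \<mu>"
proof -
  have lower: "\<alpha> \<le> (norm \<mu> - c) * norm e\<^sub>0"
    using feasible norm_cauchy_schwarz[of \<mu> e\<^sub>0] by (simp add: algebra_simps)
  have gap: "norm \<mu> - c > 0"
  proof (rule ccontr)
    assume "\<not> norm \<mu> - c > 0"
    then have "(norm \<mu> - c) * norm e\<^sub>0 \<le> 0"
      by (simp add: mult_nonpos_nonneg)
    with lower \<open>0 < \<alpha>\<close> show False by simp
  qed
  have "e\<^sub>0 \<noteq> 0"
    using lower \<open>0 < \<alpha>\<close> by auto
  have "norm \<mu> > 0"
    using gap \<open>0 \<le> c\<close> by linarith
  define \<rho> where "\<rho> = \<alpha> / (norm \<mu> - c)"
  have "\<rho> \<le> norm e\<^sub>0"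
    using lower gap by (simp add: \<rho>_def pos_divide_le_eq mult.commute)
  have boundary: "\<alpha> + c * \<rho> = norm \<mu> * \<rho>"
    using gap by (simp add: \<rho>_def field_simps)
  have "norm e\<^sub>0 \<le> \<rho>"
  proof -
    define e where "e = (\<rho> / norm \<mu>) *\<^sub>R \<mu>"
    have "norm e = \<rho>"
      using \<open>norm \<mu> > 0\<close> gap \<open>0 < \<alpha>\<close> by (simp add: e_def \<rho>_def)
    moreover have "\<mu> \<bullet> e = norm \<mu> * \<rho>"
      using \<open>norm \<mu> > 0\<close> by (simp add: e_def power2_norm_eq_inner[symmetric] power2_eq_square)
    ultimately show ?thesis
      using minimal[of e] boundary by simp
  qed
  with \<open>\<rho> \<le> norm e\<^sub>0\<close> have "norm e\<^sub>0 = \<rho>" by simp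
  with feasible boundary have "\<mu> \<bullet> e\<^sub>0 = norm \<mu> * norm e\<^sub>0"
    using norm_cauchy_schwarz[of \<mu> e\<^sub>0] by simp
  then have parallel: "norm \<mu> *\<^sub>R e\<^sub>0 = norm e\<^sub>0 *\<^sub>R \<mu>"
    by (simp add: norm_cauchy_schwarz_eq)
  have "e\<^sub>0 = inverse (norm \<mu>) *\<^sub>R (norm \<mu> *\<^sub>R e\<^sub>0)"
    using \<open>norm \<mu> > 0\<close> by simp
  also have "\<dots> = (norm e\<^sub>0 / norm \<mu>) *\<^sub>R \<mu>"
    by (simp add: parallel divide_inverse mult.commute)
  finally have "e\<^sub>0 = (norm e\<^sub>0 / norm \<mu>) *\<^sub>R \<mu>" .
  with \<open>e\<^sub>0 \<noteq> 0\<close> \<open>norm \<mu> > 0\<close> show ?thesis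
    by (metis divide_pos_pos zero_less_norm_iff)
qed

lemma restrict_vec_scaleR: "restrict_vec D (k *\<^sub>R v) = k *\<^sub>R restrict_vec D v"
  by (auto simp: vec_eq_iff restrict_vec_def)

lemma beta_desirable_scaleR:
  assumes "beta_desirable D \<beta> v"
  shows "beta_desirable D \<beta> (k *\<^sub>R v)"
proof -
  have "\<bar>k\<bar> * (\<beta> * norm v) \<le> \<bar>k\<bar> * norm (restrict_vec D v)"
    using assms unfolding beta_desirable_def by (rule mult_left_mono) simp
  then show ?thesis
    by (simp add: beta_desirable_def restrict_vec_scaleR mult.left_commute)
qed

lemma norm_restrict_vec_partition:
  assumes "D \<inter> U = {}" "D \<union> U = UNIV"
  shows "(norm v)\<^sup>2 = (norm (restrict_vec D v))\<^sup>2 + (norm (restrict_vec U v))\<^sup>2"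
proof -
  have "v = restrict_vec D v + restrict_vec U v"
    using assms by (auto simp: vec_eq_iff restrict_vec_def)
  moreover have "restrict_vec D v \<bullet> restrict_vec U v = 0"
    using assms by (auto simp: inner_vec_def restrict_vec_def intro!: sum.neutral)
  ultimately show ?thesis
    by (metis norm_add_Pythagorean orthogonal_def)
qed

lemma beta_desirable_if_ratio:
  assumes "D \<inter> U = {}" "D \<union> U = UNIV" "0 < \<beta>" "\<beta> < 1"
    and ratio: "norm (restrict_vec D v) \<ge> \<beta> / sqrt (1 - \<beta>\<^sup>2) * norm (restrict_vec U v)"
  shows "beta_desirable D \<beta> v"
proof -
  let ?a = "norm (restrict_vec D v)" and ?b = "norm (restrict_vec U v)"
  have "\<beta>\<^sup>2 < 1"
    using assms by (simp add: power_less_one_iff)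
  then have "\<beta> * ?b \<le> sqrt (1 - \<beta>\<^sup>2) * ?a"
    using ratio by (simp add: field_simps)
  then have "(\<beta> * ?b)\<^sup>2 \<le> (sqrt (1 - \<beta>\<^sup>2) * ?a)\<^sup>2"
    using \<open>0 < \<beta>\<close> by (intro power_mono) auto
  with \<open>\<beta>\<^sup>2 < 1\<close> have "\<beta>\<^sup>2 * (?a\<^sup>2 + ?b\<^sup>2) \<le> ?a\<^sup>2"
    by (simp add: power_mult_distrib algebra_simps)
  then have "(\<beta> * norm v)\<^sup>2 \<le> ?a\<^sup>2"
    using norm_restrict_vec_partition[OF assms(1,2), of v] by (simp add: power_mult_distrib)
  then show ?thesis
    unfolding beta_desirable_def by (simp add: power2_le_iff_abs_le)
qed

theorem corollary2:
  fixes D U :: "'n::finite set" and \<mu> :: "real ^ 'n" and s \<alpha> \<delta> \<beta> :: real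
  assumes partition: "D \<inter> U = {}" "D \<union> U = UNIV"
    and s_pos: "s > 0"
    and alpha_pos: "\<alpha> > 0"
    and delta: "0 < \<delta>" "\<delta> \<le> 1/2"
    and beta: "0 < \<beta>" "\<beta> < 1"
    and mu_cond: "norm (restrict_vec D \<mu>) \<ge> \<beta> / sqrt (1 - \<beta>^2) * norm (restrict_vec U \<mu>)"
    and feasible: "\<exists>e :: real ^ 'n.
          \<alpha> - \<mu> \<bullet> e - Phi_inv \<delta> * norm (mat s *v e) \<le> 0"
    and optimal: "\<alpha> - \<mu> \<bullet> e\<^sub>0 - Phi_inv \<delta> * norm (mat s *v e\<^sub>0) \<le> 0"
                 "\<forall>e :: real ^ 'n. \<alpha> - \<mu> \<bullet> e - Phi_inv \<delta> * norm (mat s *v e) \<le> 0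
                      \<longrightarrow> norm e\<^sub>0 \<le> norm e"
  shows "beta_desirable D \<beta> e\<^sub>0"
proof -
  define c where "c = - Phi_inv \<delta> * s"
  have "0 \<le> c"
    using Phi_inv_nonpos[OF delta] s_pos by (simp add: c_def mult_nonpos_nonneg)
  have constraint: "\<alpha> - \<mu> \<bullet> e - Phi_inv \<delta> * norm (mat s *v e) \<le> 0 \<longleftrightarrow> \<alpha> + c * norm e \<le> \<mu> \<bullet> e"
    for e :: "real ^ 'n"
    using s_pos by (simp add: mat_mult_vector c_def algebra_simps)
  obtain k where "e\<^sub>0 = k *\<^sub>R \<mu>"
    using min_norm_solution_is_pos_multiple[OF alpha_pos \<open>0 \<le> c\<close>] optimal
    unfolding constraint by blast
  then show ?thesis
    using beta_desirable_scaleR beta_desirable_if_ratio[OF partition beta mu_cond] by simp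
qed

end
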